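(* Let $S$ have a maximum of type (a), fix $\xi\in\mathbb{R}^m$, and let $\tilde S(x,N)=S(x,N)+\sqrt{h(N)}(x^*-x)^T\xi$, which for large $N$ has a unique maximum at a point $\tilde x^*(N)$. Assume $\epsilon(N)\ll 1/\sqrt{h(N)}$. Then, as $N\to\infty$: (i) $\tilde x^*(N)-x^*(N)=D^2s(x^* )^{-1}\dfrac{\xi}{\sqrt{h(N)}}+O\big(\tfrac1{h(N)}\big)$; (ii) $\tilde S(\tilde x^*(N),N)=S(x^*(N),N)-\tfrac12\xi^TD^2s(x^* )^{-1}\xi+O\big(\tfrac1{\sqrt{h(N)}}\big)$ when $\epsilon(N)\ll 1/h(N)$, and $\tilde S(\tilde x^*(N),N)=S(x^*(N),N)-\tfrac12\xi^TD^2s(x^* )^{-1}\xi+O\big(\sqrt{h(N)}\epsilon(N)\big)$ when $\epsilon(N)\gg1/h(N)$; (iii) $\dfrac{\sqrt{\det D^2S(x^*(N),N)}}{\sqrt{\det D^2\tilde S(\tilde x^*(N),N)}}=1+O\big(\tfrac1{\sqrt{h(N)}}\big)$.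
   Context: Let $m\ge 1$ and let $\Omega\subset\mathbb{R}^m$ be convex. For each $N$, $S(\cdot,N)$ is a real function on $\Omega$. Standing assumptions: there is $N_0$ such that for all $N>N_0$, $S(\cdot,N)$ has a unique maximum at $x^*(N)$, and $x^*(N)\to x^*$. There are $C^2$, three times differentiable functions $s:\Omega\to\mathbb{R}$, $\sigma:\Omega\to\mathbb{R}^m$ (relevant derivatives bounded), a sequence $\epsilon(N)\to0$ and $h(N)\to\infty$ with $h(N)=N$ or $h(N)/N\to0$, such that for large $N$: $DS(x,N)=h(N)[Ds(x)+\sigma(x)\epsilon(N)]$, $D^2S(x,N)$ is negative definite, and $D^2s(x)$ is invertible ($D$ gradient, $D^2$ Hessian). Type (a) maximum: $x^*(N)$ lies in the interior of $\Omega$ at distance bounded below by a positive constant from $\partial\Omega$ for all large $N$, so $DS(x^*(N),N)=0$ and $Ds(x^* )=0$. *)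

theory Defs
  imports "HOL-Analysis.Analysis" "HOL-Library.Landau_Symbols"
begin

definition tildeS ::
  "(real^'n \<Rightarrow> nat \<Rightarrow> real) \<Rightarrow> (nat \<Rightarrow> real) \<Rightarrow> real^'n \<Rightarrow> real^'n \<Rightarrow> real^'n \<Rightarrow> nat \<Rightarrow> real"
  where "tildeS S h xstar xi x N = S x N + sqrt (h N) * ((xstar - x) \<bullet> xi)"

definition unique_max_at :: "'a set \<Rightarrow> ('a \<Rightarrow> real) \<Rightarrow> 'a \<Rightarrow> bool"
  where "unique_max_at Om f p \<longleftrightarrow> p \<in> Om \<and> (\<forall>x\<in>Om. x \<noteq> p \<longrightarrow> f x < f p)"

end

theory Submission
  imports Defs
begin

(* Write the gradient of S( . ,N) as h N *R F_N, where F_N x = Ds x + eps N *R sigma x is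
   scaled_grad N below, and let A = D2s xstar and q = 1 / sqrt (h N).  The Jacobian of F_N is
   A + O(|x - xstar| + |eps N|); hence Ds xstar = 0 and, xs N being a root of F_N,
   |xs N - xstar| = O(eps N) = O(q).  The perturbed function has gradient h N *R (F_N x - q *R xi), so
   its maximiser solves F_N x = q *R xi.  The simplified Newton map x - A^-1 (F_N x - q *R xi)
   contracts a ball of radius O(q) around xs N, and the linearisation error of F_N, quadratic in the
   displacement, gives xt - xs = q A^-1 xi + O(q^2).  A second-order Taylor expansion of S around its
   critical point xs N gives the value, and both Hessians are h N (A + O(q)), so the ratio of their
   determinants is 1 + O(q). *)

section \<open>Matrices and determinants\<close>

lemma matrix_inv_cancel:
  fixes A :: "real^'n^'n"
  assumes "invertible A"
  shows "matrix_inv A *v (A *v v) = v" "A *v (matrix_inv A *v v) = v"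
proof -
  have "A ** matrix_inv A = mat 1 \<and> matrix_inv A ** A = mat 1"
    unfolding matrix_inv_def using assms unfolding invertible_def by (rule someI_ex)
  then show "matrix_inv A *v (A *v v) = v" "A *v (matrix_inv A *v v) = v"
    by (simp_all add: matrix_vector_mul_assoc)
qed

lemma norm_matrix_vector_mult_le:
  fixes M :: "real^'n^'m"
  shows "norm (M *v v) \<le> norm M * norm v"
proof -
  have "norm (M *v v) = L2_set (\<lambda>i. \<bar>M $ i \<bullet> v\<bar>) UNIV"
    by (simp add: norm_vec_def matrix_vector_mult_def inner_vec_def mult.commute)
  also have "\<dots> \<le> L2_set (\<lambda>i. norm (M $ i) * norm v) UNIV"
    by (intro L2_set_mono Cauchy_Schwarz_ineq2) simp
  also have "\<dots> = norm M * norm v"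
    by (simp add: norm_vec_def L2_set_left_distrib)
  finally show ?thesis .
qed

lemma abs_matrix_entry_le:
  fixes M :: "real^'n^'m"
  shows "\<bar>M $ i $ j\<bar> \<le> norm M"
  using component_le_norm_cart[of "M $ i" j] Finite_Cartesian_Product.norm_nth_le[of M i] by linarith

lemma det_scaleR:
  fixes M :: "real^'n^'n"
  shows "det (c *\<^sub>R M) = c ^ CARD('n) * det M"
proof -
  have "(\<Prod>i\<in>UNIV. (c *\<^sub>R M) $ i $ p i) = c ^ CARD('n) * (\<Prod>i\<in>UNIV. M $ i $ p i)" for p
    by (simp add: prod.distrib)
  then show ?thesis
    unfolding det_def by (simp add: sum_distrib_left algebra_simps)
qed

lemma abs_prod_diff_le:
  fixes a b :: "'i \<Rightarrow> real"
  assumes "1 \<le> K" "\<And>i. i \<in> I \<Longrightarrow> \<bar>a i\<bar> \<le> K" "\<And>i. i \<in> I \<Longrightarrow> \<bar>b i\<bar> \<le> K"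
  shows "\<bar>(\<Prod>i\<in>I. a i) - (\<Prod>i\<in>I. b i)\<bar> \<le> K ^ card I * (\<Sum>i\<in>I. \<bar>a i - b i\<bar>)"
proof -
  have "0 < K" using assms(1) by simp
  have scaled_le_1: "norm (x / K) \<le> 1" if "\<bar>x\<bar> \<le> K" for x :: real
    using that \<open>0 < K\<close> by (simp add: abs_div)
  have "norm ((\<Prod>i\<in>I. a i / K) - (\<Prod>i\<in>I. b i / K)) \<le> (\<Sum>i\<in>I. norm (a i / K - b i / K))"
    using assms(2,3) by (intro norm_prod_diff scaled_le_1) auto
  also have "\<dots> \<le> (\<Sum>i\<in>I. \<bar>a i - b i\<bar>)"
  proof (intro sum_mono)
    fix i
    have "norm (a i / K - b i / K) = \<bar>a i - b i\<bar> / K"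
      using \<open>0 < K\<close> by (simp add: abs_div flip: diff_divide_distrib)
    also have "\<dots> \<le> \<bar>a i - b i\<bar>"
      using assms(1) by (simp add: divide_le_eq mult_le_cancel_left1)
    finally show "norm (a i / K - b i / K) \<le> \<bar>a i - b i\<bar>" .
  qed
  finally have diff_le: "\<bar>(\<Prod>i\<in>I. a i / K) - (\<Prod>i\<in>I. b i / K)\<bar> \<le> (\<Sum>i\<in>I. \<bar>a i - b i\<bar>)"
    by simp
  moreover have "(\<Prod>i\<in>I. c i / K) = (\<Prod>i\<in>I. c i) / K ^ card I" for c :: "'i \<Rightarrow> real"
    by (simp add: prod_dividef)
  ultimately have "\<bar>(\<Prod>i\<in>I. a i) - (\<Prod>i\<in>I. b i)\<bar> / K ^ card I \<le> (\<Sum>i\<in>I. \<bar>a i - b i\<bar>)"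
    using \<open>0 < K\<close> by (simp add: abs_div flip: diff_divide_distrib)
  then show ?thesis
    using \<open>0 < K\<close> by (simp add: pos_divide_le_eq mult.commute)
qed

lemma abs_det_diff_le:
  fixes M M' :: "real^'n^'n"
  assumes "1 \<le> K" "norm M \<le> K" "norm M' \<le> K"
  shows "\<bar>det M - det M'\<bar> \<le> fact CARD('n) * K ^ CARD('n) * CARD('n) * norm (M - M')"
proof -
  have term_diff: "\<bar>(\<Prod>i\<in>UNIV. M $ i $ p i) - (\<Prod>i\<in>UNIV. M' $ i $ p i)\<bar>
                     \<le> K ^ CARD('n) * (CARD('n) * norm (M - M'))" for p
  proof -
    have "\<bar>(\<Prod>i\<in>UNIV. M $ i $ p i) - (\<Prod>i\<in>UNIV. M' $ i $ p i)\<bar>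
            \<le> K ^ CARD('n) * (\<Sum>i\<in>UNIV. \<bar>M $ i $ p i - M' $ i $ p i\<bar>)"
      using assms abs_matrix_entry_le by (intro abs_prod_diff_le) (auto intro: order_trans)
    also have "\<dots> \<le> K ^ CARD('n) * (\<Sum>i\<in>(UNIV::'n set). norm (M - M'))"
      using assms(1) abs_matrix_entry_le[of "M - M'"] by (intro mult_left_mono sum_mono) auto
    finally show ?thesis by simp
  qed
  have "\<bar>det M - det M'\<bar>
          = \<bar>\<Sum>p\<in>{p. p permutes UNIV}. of_int (sign p) * ((\<Prod>i\<in>UNIV. M $ i $ p i) - (\<Prod>i\<in>UNIV. M' $ i $ p i))\<bar>"
    unfolding det_def by (simp add: sum_subtractf right_diff_distrib)
  also have "\<dots> \<le> (\<Sum>p\<in>{p. p permutes (UNIV::'n set)}. K ^ CARD('n) * (CARD('n) * norm (M - M')))"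
    by (intro order_trans[OF sum_abs] sum_mono) (simp add: abs_mult sign_def term_diff)
  also have "\<dots> = fact CARD('n) * K ^ CARD('n) * CARD('n) * norm (M - M')"
    by (simp add: card_permutations)
  finally show ?thesis .
qed

section \<open>Asymptotic lemmas\<close>

lemma bigo_tendsto_zero:
  fixes f g :: "'a \<Rightarrow> real"
  assumes "f \<in> O[F](g)" "(g \<longlongrightarrow> 0) F"
  shows "(f \<longlongrightarrow> 0) F"
proof -
  obtain c where "eventually (\<lambda>x. norm (f x) \<le> c * norm (g x)) F"
    using assms(1) by (elim landau_o.bigE)
  moreover have "((\<lambda>x. c * norm (g x)) \<longlongrightarrow> 0) F"
    using tendsto_mult_right_zero[OF tendsto_norm_zero[OF assms(2)]] .
  ultimately show ?thesis by (rule Lim_null_comparison)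
qed

lemma abs_sqrt_ratio_minus_one_le:
  fixes t1 t2 :: real
  assumes "D \<noteq> 0" "\<bar>t1 - D\<bar> \<le> e" "\<bar>t2 - D\<bar> \<le> e" "e \<le> \<bar>D\<bar> / 2"
  shows "\<bar>sqrt t1 / sqrt t2 - 1\<bar> \<le> 4 * e / \<bar>D\<bar>"
proof -
  define u where "u = t1 / t2"
  have t2: "\<bar>D\<bar> / 2 \<le> \<bar>t2\<bar>" using assms by linarith
  have "0 < u"
    using assms unfolding u_def by (cases "D > 0") (auto simp: zero_less_divide_iff)
  have "u - 1 = (sqrt u - 1) * (sqrt u + 1)"
    using \<open>0 < u\<close> by (simp add: algebra_simps)
  then have "\<bar>u - 1\<bar> = \<bar>sqrt u - 1\<bar> * (sqrt u + 1)"
    using \<open>0 < u\<close> by (simp add: abs_mult)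
  then have "\<bar>sqrt u - 1\<bar> \<le> \<bar>u - 1\<bar>"
    using \<open>0 < u\<close> mult_left_mono[of 1 "sqrt u + 1" "\<bar>sqrt u - 1\<bar>"] by simp
  also have "\<bar>u - 1\<bar> = \<bar>t1 - t2\<bar> / \<bar>t2\<bar>"
  proof -
    have "t2 \<noteq> 0" using t2 assms(1) by auto
    then have "u - 1 = (t1 - t2) / t2" by (simp add: u_def field_simps)
    then show ?thesis by (simp add: abs_div)
  qed
  also have "\<dots> \<le> (2 * e) / (\<bar>D\<bar> / 2)"
    using assms t2 by (intro frac_le) auto
  finally show ?thesis by (simp add: u_def real_sqrt_divide)
qed

lemma sqrt_ratio_bigo:
  fixes t1 t2 g :: "'a \<Rightarrow> real"
  assumes "D \<noteq> 0" "(\<lambda>x. t1 x - D) \<in> O[F](g)" "(\<lambda>x. t2 x - D) \<in> O[F](g)" "(g \<longlongrightarrow> 0) F"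
  shows "(\<lambda>x. sqrt (t1 x) / sqrt (t2 x) - 1) \<in> O[F](g)"
proof -
  obtain c1 c2 where c: "c1 > 0" "c2 > 0"
    and t1: "eventually (\<lambda>x. \<bar>t1 x - D\<bar> \<le> c1 * \<bar>g x\<bar>) F"
    and t2: "eventually (\<lambda>x. \<bar>t2 x - D\<bar> \<le> c2 * \<bar>g x\<bar>) F"
    using assms(2,3) by (auto elim!: landau_o.bigE)
  have "eventually (\<lambda>x. (c1 + c2) * \<bar>g x\<bar> < \<bar>D\<bar> / 2) F"
    by (rule order_tendstoD(2)[OF tendsto_mult_right_zero[OF tendsto_rabs_zero[OF assms(4)]]])
      (use assms(1) in simp)
  with t1 t2 have "eventually (\<lambda>x. norm (sqrt (t1 x) / sqrt (t2 x) - 1) \<le> 4 * (c1 + c2) / \<bar>D\<bar> * norm (g x)) F"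
  proof eventually_elim
    case (elim x)
    moreover have "0 \<le> c1 * \<bar>g x\<bar>" "0 \<le> c2 * \<bar>g x\<bar>" using c by auto
    ultimately have "\<bar>sqrt (t1 x) / sqrt (t2 x) - 1\<bar> \<le> 4 * ((c1 + c2) * \<bar>g x\<bar>) / \<bar>D\<bar>"
      by (intro abs_sqrt_ratio_minus_one_le[OF assms(1)]) (auto simp: distrib_right)
    then show ?case by (metis mult.assoc real_norm_def times_divide_eq_left)
  qed
  then show ?thesis by (rule bigoI)
qed

lemma det_bigo:
  fixes P :: "'a \<Rightarrow> real^'n^'n"
  assumes "(\<lambda>x. norm (P x - A)) \<in> O[F](g)" "(g \<longlongrightarrow> 0) F"
  shows "(\<lambda>x. det (P x) - det A) \<in> O[F](g)"
proof -
  define K where "K = norm A + 1"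
  have "eventually (\<lambda>x. norm (P x - A) < 1) F"
    using bigo_tendsto_zero[OF assms] by (auto dest: order_tendstoD(2)[where a = 1])
  then have "eventually (\<lambda>x. norm (det (P x) - det A)
               \<le> fact CARD('n) * K ^ CARD('n) * CARD('n) * norm (norm (P x - A))) F"
  proof eventually_elim
    case (elim x)
    then have "norm (P x) \<le> K" using norm_triangle_ineq[of "P x - A" A] by (simp add: K_def)
    then show ?case using abs_det_diff_le[of K "P x" A] by (simp add: K_def)
  qed
  then have "(\<lambda>x. det (P x) - det A) \<in> O[F](\<lambda>x. norm (P x - A))"
    by (rule bigoI)
  then show ?thesis using assms(1) by (rule landau_o.big_trans)
qed

section \<open>Taylor estimates and critical points\<close>

lemma has_derivative_along_segment:
  fixes F :: "'a::real_normed_vector \<Rightarrow> 'b::real_normed_vector"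
  assumes "convex T" "x \<in> T" "y \<in> T" "t \<in> {0..1}"
    and F_deriv: "\<And>z. z \<in> T \<Longrightarrow> (F has_derivative F' z) (at z within T)"
  shows "((\<lambda>t. F (x + t *\<^sub>R (y - x))) has_derivative (\<lambda>u. F' (x + t *\<^sub>R (y - x)) (u *\<^sub>R (y - x))))
           (at t within {0..1})"
proof -
  have in_T: "x + s *\<^sub>R (y - x) \<in> T" if "s \<in> {0..1}" for s
    using convexD_alt[OF assms(1-3), of s] that by (simp add: algebra_simps)
  then have img: "(\<lambda>s. x + s *\<^sub>R (y - x)) ` {0..1} \<subseteq> T" by auto
  have "((\<lambda>s. x + s *\<^sub>R (y - x)) has_derivative (\<lambda>u. u *\<^sub>R (y - x))) (at t within {0..1})"
    by (auto intro!: derivative_eq_intros)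
  from diff_chain_within[OF this has_derivative_subset[OF F_deriv[OF in_T[OF assms(4)]] img]]
  show ?thesis by (simp add: o_def)
qed

lemma linearization_bound:
  fixes F :: "real^'n \<Rightarrow> real^'m"
  assumes "convex T" "x \<in> T" "y \<in> T"
    and F_deriv: "\<And>z. z \<in> T \<Longrightarrow> (F has_derivative (\<lambda>v. J z *v v)) (at z within T)"
    and J_close: "\<And>z. z \<in> T \<Longrightarrow> norm (J z - L) \<le> \<kappa>"
  shows "norm (F y - F x - L *v (y - x)) \<le> \<kappa> * norm (y - x)"
proof -
  have deriv: "((\<lambda>z. F z - L *v z) has_derivative (\<lambda>v. (J z - L) *v v)) (at z within T)"
    if "z \<in> T" for z
    using has_derivative_diff[OF F_deriv[OF that]
        bounded_linear_imp_has_derivative[OF matrix_vector_mul_bounded_linear, of L]]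
    by (simp add: matrix_vector_mult_diff_rdistrib)
  have bound: "onorm (\<lambda>v. (J z - L) *v v) \<le> \<kappa>" if "z \<in> T" for z
    using norm_matrix_vector_mult_le[of "J z - L"] J_close[OF that]
    by (intro onorm_le) (metis mult_right_mono norm_ge_zero order_trans)
  have "norm ((F y - L *v y) - (F x - L *v x)) \<le> \<kappa> * norm (y - x)"
    by (rule differentiable_bound[OF assms(1) deriv bound assms(3,2)])
  then show ?thesis by (simp add: matrix_vector_mult_diff_distrib algebra_simps)
qed

lemma second_order_bound:
  fixes f :: "real^'n \<Rightarrow> real"
  assumes "convex T" "x \<in> T" "y \<in> T"
    and f_deriv: "\<And>z. z \<in> T \<Longrightarrow> (f has_derivative (\<lambda>v. g z \<bullet> v)) (at z within T)"
    and g_close: "\<And>z. z \<in> T \<Longrightarrow> norm (g z - g x - A *v (z - x)) \<le> \<kappa> * norm (z - x)"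
    and "0 \<le> \<kappa>"
  shows "\<bar>f y - f x - g x \<bullet> (y - x) - 1/2 * ((y - x) \<bullet> (A *v (y - x)))\<bar> \<le> \<kappa> * (norm (y - x))\<^sup>2"
proof -
  define d where "d = y - x"
  define \<gamma> where "\<gamma> t = x + t *\<^sub>R d" for t :: real
  define \<phi> where "\<phi> t = f (\<gamma> t) - t * (g x \<bullet> d) - 1/2 * t\<^sup>2 * (d \<bullet> (A *v d))" for t
  have \<gamma>_in: "\<gamma> t \<in> T" if "t \<in> {0..1}" for t
    using convexD_alt[OF assms(1-3), of t] that by (simp add: \<gamma>_def d_def algebra_simps)
  have \<phi>_deriv: "(\<phi> has_derivative (\<lambda>u. u * ((g (\<gamma> t) - g x - A *v (\<gamma> t - x)) \<bullet> d))) (at t within {0..1})"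
    if "t \<in> {0..1}" for t
    using has_derivative_along_segment[OF assms(1-3) that f_deriv]
    unfolding \<phi>_def
    by (auto intro!: derivative_eq_intros
        simp: \<gamma>_def d_def matrix_vector_mult_scaleR inner_diff_left inner_commute algebra_simps)
  have \<phi>_bound: "onorm (\<lambda>u. u * ((g (\<gamma> t) - g x - A *v (\<gamma> t - x)) \<bullet> d)) \<le> \<kappa> * (norm d)\<^sup>2"
    if "t \<in> {0..1}" for t
  proof (intro onorm_le)
    fix u :: real
    have "\<bar>(g (\<gamma> t) - g x - A *v (\<gamma> t - x)) \<bullet> d\<bar> \<le> \<kappa> * norm (\<gamma> t - x) * norm d"
      using g_close[OF \<gamma>_in[OF that]]
      by (intro order_trans[OF Cauchy_Schwarz_ineq2] mult_right_mono) auto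
    also have "\<dots> \<le> \<kappa> * norm d * norm d"
      using that \<open>0 \<le> \<kappa>\<close>
      by (intro mult_right_mono mult_left_mono) (auto simp: \<gamma>_def mult_left_le_one_le)
    finally have "\<bar>(g (\<gamma> t) - g x - A *v (\<gamma> t - x)) \<bullet> d\<bar> \<le> \<kappa> * (norm d)\<^sup>2"
      by (simp add: power2_eq_square mult.assoc)
    then show "norm (u * ((g (\<gamma> t) - g x - A *v (\<gamma> t - x)) \<bullet> d)) \<le> \<kappa> * (norm d)\<^sup>2 * norm u"
      by (metis abs_ge_zero abs_mult mult.commute mult_left_mono real_norm_def)
  qed
  have "norm (\<phi> 1 - \<phi> 0) \<le> \<kappa> * (norm d)\<^sup>2 * norm (1 - 0 :: real)"
    by (rule differentiable_bound[OF _ \<phi>_deriv \<phi>_bound]) auto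
  then show ?thesis by (simp add: \<phi>_def \<gamma>_def d_def)
qed

lemma negdef_hessian_below_tangent:
  fixes f :: "real^'n \<Rightarrow> real"
  assumes "convex Om"
    and f_deriv: "\<And>x. x \<in> Om \<Longrightarrow> (f has_derivative (\<lambda>v. g x \<bullet> v)) (at x within Om)"
    and g_deriv: "\<And>x. x \<in> Om \<Longrightarrow> (g has_derivative (\<lambda>v. H x *v v)) (at x within Om)"
    and negdef: "\<And>x v. x \<in> Om \<Longrightarrow> v \<noteq> 0 \<Longrightarrow> v \<bullet> (H x *v v) < 0"
    and "x \<in> Om" "y \<in> Om" "x \<noteq> y"
  shows "f y < f x + g x \<bullet> (y - x)"
proof -
  define d where "d = y - x"
  define \<gamma> where "\<gamma> t = x + t *\<^sub>R d" for t :: real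
  have "d \<noteq> 0" using \<open>x \<noteq> y\<close> by (simp add: d_def)
  have \<gamma>_in: "\<gamma> t \<in> Om" if "t \<in> {0..1}" for t
    using convexD_alt[OF assms(1) \<open>x \<in> Om\<close> \<open>y \<in> Om\<close>, of t] that by (simp add: \<gamma>_def d_def algebra_simps)
  have slope_deriv:
    "((\<lambda>t. f (\<gamma> t) - t * (g x \<bullet> d)) has_derivative (\<lambda>u. u * (g (\<gamma> t) \<bullet> d - g x \<bullet> d))) (at t within {0..1})"
    if "t \<in> {0..1}" for t
  proof -
    have "((\<lambda>t. f (\<gamma> t)) has_derivative (\<lambda>u. u * (g (\<gamma> t) \<bullet> d))) (at t within {0..1})"
      using has_derivative_along_segment[OF assms(1) \<open>x \<in> Om\<close> \<open>y \<in> Om\<close> that f_deriv]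
      by (simp add: \<gamma>_def d_def)
    moreover have "((\<lambda>t. t * (g x \<bullet> d)) has_derivative (\<lambda>u. u * (g x \<bullet> d))) (at t within {0..1})"
      by (auto intro!: derivative_eq_intros)
    ultimately show ?thesis
      using has_derivative_diff by (fastforce simp: right_diff_distrib)
  qed
  have gd_deriv: "((\<lambda>t. g (\<gamma> t) \<bullet> d) has_derivative (\<lambda>u. u * (d \<bullet> (H (\<gamma> t) *v d)))) (at t within {0..1})"
    if "t \<in> {0..1}" for t
    using has_derivative_inner_left[OF has_derivative_along_segment[OF assms(1) \<open>x \<in> Om\<close> \<open>y \<in> Om\<close> that g_deriv]]
    by (simp add: \<gamma>_def d_def matrix_vector_mult_scaleR inner_commute)
  obtain \<tau> where \<tau>: "\<tau> \<in> {0<..<1}"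
    and mvt1: "(f (\<gamma> 1) - 1 * (g x \<bullet> d)) - (f (\<gamma> 0) - 0 * (g x \<bullet> d)) = (1 - 0) * (g (\<gamma> \<tau>) \<bullet> d - g x \<bullet> d)"
    using mvt_simple[of 0 1 "\<lambda>t. f (\<gamma> t) - t * (g x \<bullet> d)" "\<lambda>t u. u * (g (\<gamma> t) \<bullet> d - g x \<bullet> d)"]
      slope_deriv by auto
  have "((\<lambda>t. g (\<gamma> t) \<bullet> d) has_derivative (\<lambda>u. u * (d \<bullet> (H (\<gamma> t) *v d)))) (at t within {0..\<tau>})"
    if "0 \<le> t" "t \<le> \<tau>" for t
    using gd_deriv[of t] that \<tau> by (auto intro: has_derivative_subset)
  then obtain \<eta> where \<eta>: "\<eta> \<in> {0<..<\<tau>}"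
    and mvt2: "g (\<gamma> \<tau>) \<bullet> d - g (\<gamma> 0) \<bullet> d = (\<tau> - 0) * (d \<bullet> (H (\<gamma> \<eta>) *v d))"
    using mvt_simple[of 0 \<tau> "\<lambda>t. g (\<gamma> t) \<bullet> d" "\<lambda>t u. u * (d \<bullet> (H (\<gamma> t) *v d))"] \<tau> by auto
  have "d \<bullet> (H (\<gamma> \<eta>) *v d) < 0" using negdef[OF \<gamma>_in \<open>d \<noteq> 0\<close>] \<eta> \<tau> by auto
  then have "\<tau> * (d \<bullet> (H (\<gamma> \<eta>) *v d)) < 0" using \<tau> by (simp add: mult_pos_neg)
  then have "g (\<gamma> \<tau>) \<bullet> d < g x \<bullet> d" using mvt2 by (simp add: \<gamma>_def)
  then show ?thesis using mvt1 by (simp add: \<gamma>_def d_def)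
qed

lemma unique_max_at_critical_point:
  fixes f :: "real^'n \<Rightarrow> real"
  assumes "convex Om"
    and "\<And>x. x \<in> Om \<Longrightarrow> (f has_derivative (\<lambda>v. g x \<bullet> v)) (at x within Om)"
    and "\<And>x. x \<in> Om \<Longrightarrow> (g has_derivative (\<lambda>v. H x *v v)) (at x within Om)"
    and "\<And>x v. x \<in> Om \<Longrightarrow> v \<noteq> 0 \<Longrightarrow> v \<bullet> (H x *v v) < 0"
    and "p \<in> Om" "g p = 0"
  shows "unique_max_at Om f p"
  using negdef_hessian_below_tangent[OF assms(1-4) \<open>p \<in> Om\<close>] assms(5,6)
  by (auto simp: unique_max_at_def)

lemma unique_max_at_unique:
  "unique_max_at Om f p \<Longrightarrow> unique_max_at Om f p' \<Longrightarrow> p' = p"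
  unfolding unique_max_at_def by (metis less_asym)

lemma exists_solution_by_contraction:
  fixes F :: "real^'n \<Rightarrow> real^'n"
  assumes "invertible A"
    and contraction: "\<And>x y. x \<in> cball x0 r \<Longrightarrow> y \<in> cball x0 r \<Longrightarrow>
           norm (matrix_inv A *v (F x - F y - A *v (x - y))) \<le> 1/2 * norm (x - y)"
    and radius: "2 * norm (matrix_inv A *v (v - F x0)) \<le> r"
  shows "\<exists>x\<in>cball x0 r. F x = v"
proof -
  define T where "T x = x - matrix_inv A *v (F x - v)" for x
  have T_diff: "T x - T y = - (matrix_inv A *v (F x - F y - A *v (x - y)))" for x y
    using matrix_inv_cancel(1)[OF assms(1), of "x - y"]
    by (simp add: T_def matrix_vector_mult_diff_distrib algebra_simps)
  have T_contr: "dist (T x) (T y) \<le> 1/2 * dist x y" if "x \<in> cball x0 r" "y \<in> cball x0 r" for x y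
    using contraction[OF that] by (simp add: dist_norm T_diff)
  have "0 \<le> r" using radius by (meson norm_ge_zero order_trans zero_le_mult_iff zero_le_numeral)
  have "dist (T x0) x0 = norm (matrix_inv A *v (v - F x0))"
    by (simp add: T_def dist_norm matrix_vector_mult_diff_distrib)
  then have "T x \<in> cball x0 r" if "x \<in> cball x0 r" for x
    using T_contr[OF that, of x0] dist_triangle[of x0 "T x" "T x0"] that radius \<open>0 \<le> r\<close>
    by (simp add: dist_commute)
  then have "\<exists>!x\<in>cball x0 r. T x = x"
    using T_contr \<open>0 \<le> r\<close> by (intro Banach_fix[of _ "1/2"]) (auto simp: complete_eq_closed)
  then obtain x where "x \<in> cball x0 r" "T x = x" by blast
  moreover have "F x = v" if "T x = x"
    using matrix_inv_cancel(2)[OF assms(1), of "F x - v"] that by (simp add: T_def)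
  ultimately show ?thesis by blast
qed

lemma quadratic_expansion_identity:
  fixes A :: "real^'n^'n"
  assumes "A *v w = xi" "H * q\<^sup>2 = 1"
  shows "1/2 * H * ((q *\<^sub>R w + \<rho>) \<bullet> (A *v (q *\<^sub>R w + \<rho>))) - H * q * ((q *\<^sub>R w + \<rho>) \<bullet> xi)
       = - 1/2 * (xi \<bullet> w) + 1/2 * H * q * (w \<bullet> (A *v \<rho>) - \<rho> \<bullet> xi) + 1/2 * H * (\<rho> \<bullet> (A *v \<rho>))"
proof -
  have "H * q * q * (w \<bullet> xi) = w \<bullet> xi" using assms(2) by (simp add: power2_eq_square mult.assoc)
  then show ?thesis
    using assms(1)
    by (simp add: matrix_vector_right_distrib matrix_vector_mult_scaleR inner_add_left inner_add_right
        inner_commute[of xi] algebra_simps)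
qed

section \<open>Maxima of type (a)\<close>

locale type_a_maximum =
  fixes Om :: "(real^'n) set"
    and S :: "real^'n \<Rightarrow> nat \<Rightarrow> real"
    and gradS :: "real^'n \<Rightarrow> nat \<Rightarrow> real^'n"
    and hessS :: "real^'n \<Rightarrow> nat \<Rightarrow> real^'n^'n"
    and Ds :: "real^'n \<Rightarrow> real^'n"
    and D2s :: "real^'n \<Rightarrow> real^'n^'n"
    and D3s :: "real^'n \<Rightarrow> real^'n \<Rightarrow> real^'n^'n"
    and sigma :: "real^'n \<Rightarrow> real^'n"
    and Jsigma :: "real^'n \<Rightarrow> real^'n^'n"
    and eps h :: "nat \<Rightarrow> real"
    and xs :: "nat \<Rightarrow> real^'n"
    and xstar xi :: "real^'n"
    and B \<delta> :: real
  assumes convex_Om: "convex Om"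
    and max_xs: "eventually (\<lambda>N. unique_max_at Om (\<lambda>x. S x N) (xs N)) sequentially"
    and xs_lim: "xs \<longlonglongrightarrow> xstar"
    and eps_lim: "eps \<longlonglongrightarrow> 0"
    and h_lim: "filterlim h at_top sequentially"
    and Ds_deriv: "\<And>x. x \<in> Om \<Longrightarrow> (Ds has_derivative (\<lambda>v. D2s x *v v)) (at x within Om)"
    and D2s_deriv: "\<And>x. x \<in> Om \<Longrightarrow> (D2s has_derivative D3s x) (at x within Om)"
    and sigma_deriv: "\<And>x. x \<in> Om \<Longrightarrow> (sigma has_derivative (\<lambda>v. Jsigma x *v v)) (at x within Om)"
    and bounds: "\<And>x. x \<in> Om \<Longrightarrow> norm (sigma x) \<le> B \<and> norm (Jsigma x) \<le> B \<and> onorm (D3s x) \<le> B"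
    and D2s_invertible: "\<And>x. x \<in> Om \<Longrightarrow> invertible (D2s x)"
    and S_derivs: "eventually (\<lambda>N. \<forall>x\<in>Om.
                     ((\<lambda>y. S y N) has_derivative (\<lambda>v. gradS x N \<bullet> v)) (at x within Om)
                   \<and> ((\<lambda>y. gradS y N) has_derivative (\<lambda>v. hessS x N *v v)) (at x within Om)
                   \<and> gradS x N = h N *\<^sub>R (Ds x + eps N *\<^sub>R sigma x)
                   \<and> (\<forall>v. v \<noteq> 0 \<longrightarrow> v \<bullet> (hessS x N *v v) < 0)) sequentially"
    and \<delta>_pos: "0 < \<delta>"
    and ball_in_Om: "eventually (\<lambda>N. ball (xs N) \<delta> \<subseteq> Om) sequentially"
    and eps_small: "eps \<in> o(\<lambda>N. 1 / sqrt (h N))"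
begin

definition scaled_grad :: "nat \<Rightarrow> real^'n \<Rightarrow> real^'n"
  where "scaled_grad N x = Ds x + eps N *\<^sub>R sigma x"

definition A :: "real^'n^'n"
  where "A = D2s xstar"

definition w :: "real^'n"
  where "w = matrix_inv A *v xi"

definition q :: "nat \<Rightarrow> real"
  where "q = (\<lambda>N. 1 / sqrt (h N))"

(* Twice the first simplified Newton step q N *R w, as required by exists_solution_by_contraction. *)
definition radius :: "nat \<Rightarrow> real"
  where "radius N = 2 * norm w * q N"

(* A junk value unless the perturbed maximiser exists, which it does for large N. *)
definition xt :: "nat \<Rightarrow> real^'n"
  where "xt N = (THE x. unique_max_at Om (\<lambda>x. tildeS S h xstar xi x N) x)"

definition rho :: "nat \<Rightarrow> real^'n"
  where "rho N = xt N - xs N - q N *\<^sub>R w"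

lemma eventually_xs_in_Om: "eventually (\<lambda>N. xs N \<in> Om) sequentially"
  using max_xs by eventually_elim (simp add: unique_max_at_def)

lemma xstar_in_Om: "xstar \<in> Om"
proof -
  have "eventually (\<lambda>N. ball (xs N) \<delta> \<subseteq> Om \<and> dist (xs N) xstar < \<delta>) sequentially"
    using ball_in_Om tendstoD[OF xs_lim \<delta>_pos] by (rule eventually_conj)
  then obtain N where "ball (xs N) \<delta> \<subseteq> Om" "dist (xs N) xstar < \<delta>"
    unfolding eventually_sequentially by blast
  then show ?thesis by auto
qed

lemma B_nonneg: "0 \<le> B"
  using bounds[OF xstar_in_Om] norm_ge_zero by (meson order_trans)

lemma A_invertible: "invertible A"
  using D2s_invertible[OF xstar_in_Om] by (simp add: A_def)

lemma D2s_near_xstar: "x \<in> Om \<Longrightarrow> norm (D2s x - A) \<le> B * norm (x - xstar)"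
  unfolding A_def
  by (rule differentiable_bound[OF convex_Om D2s_deriv]) (use bounds xstar_in_Om in auto)

lemma jacobian_near_A:
  assumes "x \<in> Om"
  shows "norm (D2s x + eps N *\<^sub>R Jsigma x - A) \<le> B * (norm (x - xstar) + \<bar>eps N\<bar>)"
proof -
  have "norm (D2s x + eps N *\<^sub>R Jsigma x - A) \<le> norm (D2s x - A) + \<bar>eps N\<bar> * norm (Jsigma x)"
    using norm_triangle_ineq[of "D2s x - A" "eps N *\<^sub>R Jsigma x"] by (simp add: algebra_simps)
  also have "\<dots> \<le> B * norm (x - xstar) + \<bar>eps N\<bar> * B"
    using D2s_near_xstar[OF assms] bounds[OF assms] by (intro add_mono mult_left_mono) auto
  finally show ?thesis by (simp add: algebra_simps)
qed

lemma scaled_grad_linearization: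
  assumes "x \<in> Om" "y \<in> Om"
  shows "norm (scaled_grad N y - scaled_grad N x - A *v (y - x))
           \<le> B * (norm (x - xstar) + norm (y - xstar) + \<bar>eps N\<bar>) * norm (y - x)"
proof -
  let ?T = "closed_segment x y" and ?J = "\<lambda>z. D2s z + eps N *\<^sub>R Jsigma z"
  have T_Om: "?T \<subseteq> Om" using assms convex_Om by (simp add: closed_segment_subset)
  have "(scaled_grad N has_derivative (\<lambda>v. ?J z *v v)) (at z within ?T)" if "z \<in> ?T" for z
  proof -
    have "(scaled_grad N has_derivative (\<lambda>v. D2s z *v v + eps N *\<^sub>R (Jsigma z *v v))) (at z within Om)"
      unfolding scaled_grad_def using that T_Om by (intro derivative_intros Ds_deriv sigma_deriv) auto
    then show ?thesis
      by (auto intro: has_derivative_subset[OF _ T_Om]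
          simp: matrix_vector_mult_add_rdistrib scaleR_matrix_vector_assoc)
  qed
  moreover have "norm (?J z - A) \<le> B * (norm (x - xstar) + norm (y - xstar) + \<bar>eps N\<bar>)" if "z \<in> ?T" for z
  proof -
    have "norm (z - xstar) \<le> norm (x - xstar) + norm (y - xstar)"
      using segment_furthest_le[OF that, of xstar] by (smt (verit) norm_minus_commute norm_ge_zero)
    then show ?thesis
      using jacobian_near_A[of z N] that T_Om B_nonneg
      by (smt (verit, best) mult_left_mono subsetD)
  qed
  ultimately show ?thesis
    using assms by (intro linearization_bound[of ?T]) auto
qed

lemma eventually_h_pos: "eventually (\<lambda>N. 0 < h N) sequentially"
  using h_lim by (simp add: filterlim_at_top_dense)

lemma q_tendsto: "q \<longlonglongrightarrow> 0"
proof -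
  have "filterlim (\<lambda>N. sqrt (h N)) at_infinity sequentially"
    by (rule filterlim_at_top_imp_at_infinity[OF filterlim_compose[OF sqrt_at_top h_lim]])
  then show ?thesis unfolding q_def by (rule tendsto_divide_0[OF tendsto_const])
qed

lemma eps_bigo_q: "eps \<in> O(q)"
  unfolding q_def using eps_small by (rule landau_o.small_imp_big)

lemma q_pos: "0 < h N \<Longrightarrow> 0 < q N"
  by (simp add: q_def)

lemma sqrt_eq_h_mult_q: "0 < h N \<Longrightarrow> sqrt (h N) = h N * q N"
  by (simp add: q_def real_div_sqrt)

lemma eventually_q_identities:
  "eventually (\<lambda>N. sqrt (h N) * (q N * q N) = q N \<and> h N * q N * (q N * q N) = q N
                 \<and> h N * ((q N * q N) * (q N * q N)) = q N * q N) sequentially"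
  using eventually_h_pos by eventually_elim (simp add: q_def field_simps)

lemma q_square_bigo: "(\<lambda>N. q N * q N) \<in> O(q)"
proof (rule bigoI)
  show "eventually (\<lambda>N. norm (q N * q N) \<le> 1 * norm (q N)) sequentially"
    using order_tendstoD(2)[OF tendsto_rabs_zero[OF q_tendsto] zero_less_one]
  proof eventually_elim
    case (elim N)
    then have "\<bar>q N\<bar> * \<bar>q N\<bar> \<le> \<bar>q N\<bar>" by (intro mult_left_le_one_le) auto
    then show ?case by (simp only: norm_mult real_norm_def mult_1 abs_mult)
  qed
qed

lemma eventually_critical_xs: "eventually (\<lambda>N. scaled_grad N (xs N) = 0) sequentially"
  using max_xs S_derivs ball_in_Om eventually_h_pos
proof eventually_elim
  case (elim N)
  have "xs N \<in> Om" using elim(1) by (simp add: unique_max_at_def)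
  have "xs N \<in> interior Om" using elim(3) \<delta>_pos by (meson centre_in_ball interior_maximal open_ball subsetD)
  then have "((\<lambda>y. S y N) has_derivative (\<lambda>v. gradS (xs N) N \<bullet> v)) (at (xs N))"
    using elim(2) \<open>xs N \<in> Om\<close> at_within_interior by metis
  moreover have "\<forall>y\<in>ball (xs N) \<delta>. S y N \<le> S (xs N) N"
    using elim(1,3) unfolding unique_max_at_def by (metis less_imp_le order_refl subsetD)
  ultimately have "(\<lambda>v. gradS (xs N) N \<bullet> v) = (\<lambda>v. 0)"
    using differential_zero_maxmin[of "xs N" "ball (xs N) \<delta>"] \<delta>_pos by auto
  then have "gradS (xs N) N = 0" by (metis inner_eq_zero_iff)
  then show ?case using elim(2,4) \<open>xs N \<in> Om\<close> by (simp add: scaled_grad_def)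
qed

lemma Ds_xstar: "Ds xstar = 0"
proof -
  have "(\<lambda>N. eps N *\<^sub>R sigma (xs N)) \<longlonglongrightarrow> 0"
  proof (rule Lim_null_comparison)
    show "eventually (\<lambda>N. norm (eps N *\<^sub>R sigma (xs N)) \<le> \<bar>eps N\<bar> * B) sequentially"
      using eventually_xs_in_Om by eventually_elim (use bounds in \<open>auto intro: mult_left_mono\<close>)
    show "(\<lambda>N. \<bar>eps N\<bar> * B) \<longlonglongrightarrow> 0"
      by (intro tendsto_mult_left_zero tendsto_rabs_zero eps_lim)
  qed
  moreover have "eventually (\<lambda>N. - (eps N *\<^sub>R sigma (xs N)) = Ds (xs N)) sequentially"
    using eventually_critical_xs by eventually_elim (metis add.commute minus_unique scaled_grad_def)
  ultimately have "(\<lambda>N. Ds (xs N)) \<longlonglongrightarrow> 0"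
    using tendsto_minus[of _ 0] Lim_transform_eventually by fastforce
  moreover have "(\<lambda>N. Ds (xs N)) \<longlonglongrightarrow> Ds xstar"
    using has_derivative_continuous_on[OF Ds_deriv] xs_lim xstar_in_Om eventually_xs_in_Om
    by (rule continuous_on_tendsto_compose)
  ultimately show ?thesis using LIMSEQ_unique by blast
qed

lemma xs_near_xstar:
  "eventually (\<lambda>N. norm (xs N - xstar) \<le> 2 * norm (matrix_inv A) * B * \<bar>eps N\<bar>) sequentially"
proof -
  define c where "c = norm (matrix_inv A) * B"
  have "(\<lambda>N. c * (norm (xs N - xstar) + \<bar>eps N\<bar>)) \<longlonglongrightarrow> 0"
    using xs_lim eps_lim
    by (intro tendsto_mult_right_zero tendsto_add_zero tendsto_rabs_zero tendsto_norm_zero)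
      (simp_all add: LIM_zero)
  then have "eventually (\<lambda>N. c * (norm (xs N - xstar) + \<bar>eps N\<bar>) < 1/2) sequentially"
    by (rule order_tendstoD) simp
  then show ?thesis
    using eventually_critical_xs eventually_xs_in_Om
  proof eventually_elim
    case (elim N)
    let ?d = "xs N - xstar"
    let ?R = "scaled_grad N (xs N) - scaled_grad N xstar - A *v ?d"
    have "?d = - (matrix_inv A *v (?R + eps N *\<^sub>R sigma xstar))"
      using elim(2) matrix_inv_cancel(1)[OF A_invertible, of ?d]
      by (simp add: scaled_grad_def Ds_xstar matrix_vector_mult_diff_distrib)
    then have "norm ?d \<le> norm (matrix_inv A) * (norm ?R + \<bar>eps N\<bar> * B)"
      using norm_matrix_vector_mult_le[of "matrix_inv A" "?R + eps N *\<^sub>R sigma xstar"]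
        norm_triangle_ineq[of ?R "eps N *\<^sub>R sigma xstar"] bounds[OF xstar_in_Om]
      by (smt (verit, ccfv_SIG) mult_left_mono norm_ge_zero norm_minus_cancel norm_scaleR mult_mono)
    also have "\<dots> \<le> norm (matrix_inv A) * (B * (norm ?d + \<bar>eps N\<bar>) * norm ?d + \<bar>eps N\<bar> * B)"
      using scaled_grad_linearization[OF xstar_in_Om elim(3), of N]
      by (intro mult_left_mono add_right_mono) auto
    also have "\<dots> = c * (norm ?d + \<bar>eps N\<bar>) * norm ?d + c * \<bar>eps N\<bar>"
      by (simp add: c_def algebra_simps)
    also have "\<dots> \<le> 1/2 * norm ?d + c * \<bar>eps N\<bar>"
      using elim(1) by (intro add_right_mono mult_right_mono) auto
    finally show ?case by (simp add: c_def)
  qed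
qed

lemma xs_bigo_eps: "(\<lambda>N. norm (xs N - xstar)) \<in> O(eps)"
  using xs_near_xstar by (intro bigoI) (auto elim!: eventually_mono)

lemma xs_bigo: "(\<lambda>N. norm (xs N - xstar)) \<in> O(q)"
  using xs_bigo_eps eps_bigo_q by (rule landau_o.big_trans)

lemma radius_tendsto: "radius \<longlonglongrightarrow> 0"
  unfolding radius_def using tendsto_mult_right_zero[OF q_tendsto] .

lemma radius_bigo: "radius \<in> O(q)"
  by (intro bigoI[where c = "2 * norm w"]) (simp add: radius_def abs_mult)

lemma eventually_cball_in_Om: "eventually (\<lambda>N. cball (xs N) (radius N) \<subseteq> Om) sequentially"
  using ball_in_Om order_tendstoD(2)[OF radius_tendsto \<delta>_pos]
  by eventually_elim (metis add_0 cball_subset_ball_iff dist_self dual_order.trans)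

lemma eventually_perturbed_critical_point:
  "eventually (\<lambda>N. \<exists>x\<in>cball (xs N) (radius N). scaled_grad N x = q N *\<^sub>R xi) sequentially"
proof -
  define c where "c = norm (matrix_inv A) * B"
  have "(\<lambda>N. c * (2 * (norm (xs N - xstar) + radius N) + \<bar>eps N\<bar>)) \<longlonglongrightarrow> 0"
    using xs_lim eps_lim radius_tendsto
    by (intro tendsto_mult_right_zero tendsto_add_zero tendsto_rabs_zero tendsto_norm_zero
        tendsto_mult_right_zero) (simp_all add: LIM_zero)
  then have "eventually (\<lambda>N. c * (2 * (norm (xs N - xstar) + radius N) + \<bar>eps N\<bar>) < 1/2) sequentially"
    by (rule order_tendstoD) simp
  then show ?thesis
    using eventually_cball_in_Om eventually_critical_xs eventually_h_pos
  proof eventually_elim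
    case (elim N)
    let ?X = "cball (xs N) (radius N)"
    have "norm (matrix_inv A *v (scaled_grad N x - scaled_grad N y - A *v (x - y))) \<le> 1/2 * norm (x - y)"
      if "x \<in> ?X" "y \<in> ?X" for x y
    proof -
      have near: "norm (z - xstar) \<le> norm (xs N - xstar) + radius N" if "z \<in> ?X" for z
        using that norm_triangle_ineq[of "z - xs N" "xs N - xstar"]
        by (simp add: dist_norm norm_minus_commute)
      have "norm (matrix_inv A *v (scaled_grad N x - scaled_grad N y - A *v (x - y)))
              \<le> norm (matrix_inv A) * (B * (norm (y - xstar) + norm (x - xstar) + \<bar>eps N\<bar>) * norm (x - y))"
        using scaled_grad_linearization[of y x N] elim(2) that
        by (intro order_trans[OF norm_matrix_vector_mult_le] mult_left_mono) (auto simp del: mem_cball)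
      also have "\<dots> \<le> c * (2 * (norm (xs N - xstar) + radius N) + \<bar>eps N\<bar>) * norm (x - y)"
        using near[OF that(1)] near[OF that(2)] B_nonneg
        by (simp add: c_def mult.assoc mult_left_mono mult_right_mono)
      also have "\<dots> \<le> 1/2 * norm (x - y)"
        using elim(1) by (intro mult_right_mono) auto
      finally show ?thesis .
    qed
    moreover have "2 * norm (matrix_inv A *v (q N *\<^sub>R xi - scaled_grad N (xs N))) \<le> radius N"
      using elim(3,4) by (simp add: radius_def q_def w_def matrix_vector_mult_scaleR)
    ultimately show ?case by (rule exists_solution_by_contraction[OF A_invertible])
  qed
qed

lemma eventually_unique_max_at_solution:
  "eventually (\<lambda>N. \<forall>x\<in>Om. scaled_grad N x = q N *\<^sub>R xi \<longrightarrow>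
                    unique_max_at Om (\<lambda>x. tildeS S h xstar xi x N) x) sequentially"
  using S_derivs eventually_h_pos
proof eventually_elim
  case (elim N)
  let ?g = "\<lambda>x. gradS x N - sqrt (h N) *\<^sub>R xi"
  show ?case
  proof (intro ballI impI unique_max_at_critical_point[OF convex_Om, where g = ?g and H = "\<lambda>x. hessS x N"])
    fix x assume "x \<in> Om"
    then have "((\<lambda>x. tildeS S h xstar xi x N) has_derivative
                 (\<lambda>v. gradS x N \<bullet> v + sqrt (h N) * ((0 - v) \<bullet> xi))) (at x within Om)"
      using elim(1) unfolding tildeS_def by (intro derivative_intros) auto
    moreover have "(\<lambda>v. gradS x N \<bullet> v + sqrt (h N) * ((0 - v) \<bullet> xi)) = (\<lambda>v. ?g x \<bullet> v)"
      by (rule ext) (simp add: inner_diff_left inner_diff_right inner_commute)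
    ultimately show "((\<lambda>x. tildeS S h xstar xi x N) has_derivative (\<lambda>v. ?g x \<bullet> v)) (at x within Om)"
      by simp
    have "((\<lambda>y. gradS y N) has_derivative (\<lambda>v. hessS x N *v v)) (at x within Om)"
      using elim(1) \<open>x \<in> Om\<close> by blast
    from has_derivative_diff[OF this has_derivative_const[of "sqrt (h N) *\<^sub>R xi"]]
    show "(?g has_derivative (\<lambda>v. hessS x N *v v)) (at x within Om)" by simp
    show "v \<noteq> 0 \<Longrightarrow> v \<bullet> (hessS x N *v v) < 0" for v
      using elim(1) \<open>x \<in> Om\<close> by blast
  next
    fix x assume "x \<in> Om" "scaled_grad N x = q N *\<^sub>R xi"
    then show "?g x = 0"
      using elim sqrt_eq_h_mult_q[of N] by (simp add: scaled_grad_def)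
  qed
qed

lemma eventually_xt_characterization:
  "eventually (\<lambda>N. unique_max_at Om (\<lambda>x. tildeS S h xstar xi x N) (xt N)
                  \<and> xt N \<in> cball (xs N) (radius N) \<and> scaled_grad N (xt N) = q N *\<^sub>R xi) sequentially"
  using eventually_perturbed_critical_point eventually_unique_max_at_solution eventually_cball_in_Om
proof eventually_elim
  case (elim N)
  then obtain x where x: "x \<in> cball (xs N) (radius N)" "scaled_grad N x = q N *\<^sub>R xi" by blast
  then have max: "unique_max_at Om (\<lambda>x. tildeS S h xstar xi x N) x" using elim(2,3) by blast
  have "xt N = x"
    unfolding xt_def using max unique_max_at_unique[OF max] by (rule the_equality)
  then show ?case using x max by simp
qed

lemma step_bigo: "(\<lambda>N. norm (xt N - xs N)) \<in> O(q)"
proof (rule bigoI)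
  show "eventually (\<lambda>N. norm (norm (xt N - xs N)) \<le> 2 * norm w * norm (q N)) sequentially"
    using eventually_xt_characterization eventually_h_pos
    by eventually_elim (auto simp: radius_def dist_norm norm_minus_commute abs_of_pos q_pos)
qed

lemma xt_bigo: "(\<lambda>N. norm (xt N - xstar)) \<in> O(q)"
proof -
  have "(\<lambda>N. norm (xt N - xstar)) \<in> O(\<lambda>N. norm (xt N - xs N) + norm (xs N - xstar))"
    using norm_triangle_ineq[of "xt N - xs N" "xs N - xstar" for N]
    by (intro landau_o.big_mono always_eventually) simp
  also have "(\<lambda>N. norm (xt N - xs N) + norm (xs N - xstar)) \<in> O(q)"
    using step_bigo xs_bigo by (rule sum_in_bigo)
  finally show ?thesis .
qed

lemma eventually_xt_in_Om: "eventually (\<lambda>N. xt N \<in> Om) sequentially"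
  using eventually_xt_characterization eventually_cball_in_Om by eventually_elim blast

lemma displacement_bigo: "(\<lambda>N. norm (xs N - xstar) + norm (xt N - xstar) + \<bar>eps N\<bar>) \<in> O(q)"
  using xs_bigo xt_bigo eps_bigo_q by (intro sum_in_bigo) simp_all

lemma rho_bigo: "(\<lambda>N. norm (rho N)) \<in> O(\<lambda>N. q N * q N)"
proof -
  let ?R = "\<lambda>N. norm (xs N - xstar) + norm (xt N - xstar) + \<bar>eps N\<bar>"
  have "eventually (\<lambda>N. norm (rho N) \<le> norm (matrix_inv A) * B * (?R N * norm (xt N - xs N))) sequentially"
    using eventually_xt_characterization eventually_critical_xs eventually_xs_in_Om eventually_cball_in_Om
  proof eventually_elim
    case (elim N)
    let ?d = "xt N - xs N"
    have "xt N \<in> Om" using elim(1,4) by blast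
    have "?d - q N *\<^sub>R w = - (matrix_inv A *v (scaled_grad N (xt N) - scaled_grad N (xs N) - A *v ?d))"
      using elim(1,2) matrix_inv_cancel(1)[OF A_invertible, of ?d]
      by (simp add: w_def matrix_vector_mult_diff_distrib matrix_vector_mult_scaleR)
    then have "norm (?d - q N *\<^sub>R w)
                 \<le> norm (matrix_inv A) * norm (scaled_grad N (xt N) - scaled_grad N (xs N) - A *v ?d)"
      by (simp add: norm_matrix_vector_mult_le)
    also have "\<dots> \<le> norm (matrix_inv A) * (B * ?R N * norm ?d)"
      using scaled_grad_linearization[OF elim(3) \<open>xt N \<in> Om\<close>, of N] by (intro mult_left_mono) auto
    finally show ?case by (simp add: rho_def mult.assoc)
  qed
  then have "(\<lambda>N. norm (rho N)) \<in> O(\<lambda>N. ?R N * norm (xt N - xs N))"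
    by (intro bigoI) (auto elim!: eventually_mono)
  also have "(\<lambda>N. ?R N * norm (xt N - xs N)) \<in> O(\<lambda>N. q N * q N)"
    using displacement_bigo step_bigo by (rule landau_o.big_mult)
  finally show ?thesis .
qed

lemma xt_expansion:
  "(\<lambda>N. norm (xt N - xs N - (1 / sqrt (h N)) *\<^sub>R (matrix_inv (D2s xstar) *v xi))) \<in> O(\<lambda>N. 1 / h N)"
proof -
  have "eventually (\<lambda>N. q N * q N = 1 / h N) sequentially"
    using eventually_h_pos by eventually_elim (simp add: q_def)
  then have "O(\<lambda>N. q N * q N) = O(\<lambda>N. 1 / h N)" by (rule landau_o.big.cong)
  then show ?thesis using rho_bigo by (simp add: rho_def q_def w_def A_def)
qed

lemma eventually_second_order_remainder_le:
  "eventually (\<lambda>N. norm (S (xt N) N - S (xs N) N - 1/2 * h N * ((xt N - xs N) \<bullet> (A *v (xt N - xs N))))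
          \<le> B * norm (h N * (2 * norm (xs N - xstar) + radius N + \<bar>eps N\<bar>) * (norm (xt N - xs N))\<^sup>2)) sequentially"
  using S_derivs eventually_xt_characterization eventually_critical_xs eventually_cball_in_Om eventually_h_pos
proof eventually_elim
  case (elim N)
  let ?T = "cball (xs N) (radius N)" and ?d = "xt N - xs N"
  let ?R = "\<lambda>N. 2 * norm (xs N - xstar) + radius N + \<bar>eps N\<bar>"
  have "xt N \<in> ?T" "0 \<le> radius N"
    using elim(2) by (auto intro: order_trans[OF zero_le_dist])
  then have "xs N \<in> ?T" by simp
  have grad: "gradS z N = h N *\<^sub>R scaled_grad N z" if "z \<in> ?T" for z
    using elim(1,4) that by (auto simp: scaled_grad_def)
  have S_deriv: "((\<lambda>y. S y N) has_derivative (\<lambda>v. gradS z N \<bullet> v)) (at z within ?T)" if "z \<in> ?T" for z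
    using elim(1,4) that by (meson has_derivative_subset subsetD)
  have grad_close: "norm (gradS z N - gradS (xs N) N - (h N *\<^sub>R A) *v (z - xs N))
                      \<le> B * h N * ?R N * norm (z - xs N)" if "z \<in> ?T" for z
  proof -
    have "norm (z - xstar) \<le> norm (xs N - xstar) + radius N"
      using that norm_triangle_ineq[of "z - xs N" "xs N - xstar"] by (simp add: dist_norm norm_minus_commute)
    then have "B * (norm (xs N - xstar) + norm (z - xstar) + \<bar>eps N\<bar>) * norm (z - xs N)
                 \<le> B * ?R N * norm (z - xs N)"
      using B_nonneg by (intro mult_right_mono mult_left_mono) auto
    then have "norm (scaled_grad N z - scaled_grad N (xs N) - A *v (z - xs N)) \<le> B * ?R N * norm (z - xs N)"
      using scaled_grad_linearization[of "xs N" z N] elim(4) that \<open>xs N \<in> ?T\<close> by (meson order_trans subsetD)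
    then show ?thesis
      using grad[OF that] grad[OF \<open>xs N \<in> ?T\<close>] elim(5)
      by (simp add: scaleR_matrix_vector_assoc[symmetric] flip: scaleR_diff_right)
  qed
  have "0 \<le> ?R N" using \<open>0 \<le> radius N\<close> by simp
  then have "0 \<le> B * h N * ?R N" using B_nonneg elim(5) by simp
  from second_order_bound[OF convex_cball \<open>xs N \<in> ?T\<close> \<open>xt N \<in> ?T\<close> S_deriv grad_close this]
  have "\<bar>S (xt N) N - S (xs N) N - gradS (xs N) N \<bullet> ?d - 1/2 * (?d \<bullet> ((h N *\<^sub>R A) *v ?d))\<bar>
          \<le> B * h N * ?R N * (norm ?d)\<^sup>2" .
  moreover have "gradS (xs N) N = 0" using grad[OF \<open>xs N \<in> ?T\<close>] elim(3) by simp
  moreover have "?d \<bullet> ((h N *\<^sub>R A) *v ?d) = h N * (?d \<bullet> (A *v ?d))"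
    by (simp add: scaleR_matrix_vector_assoc[symmetric])
  ultimately show ?case
    using \<open>0 \<le> ?R N\<close> elim(5) by (simp add: mult.assoc abs_mult abs_of_nonneg)
qed

lemma second_order_remainder_bigo:
  "(\<lambda>N. S (xt N) N - S (xs N) N - 1/2 * h N * ((xt N - xs N) \<bullet> (A *v (xt N - xs N)))) \<in> O(q)"
proof -
  let ?R = "\<lambda>N. 2 * norm (xs N - xstar) + radius N + \<bar>eps N\<bar>"
  have "(\<lambda>N. S (xt N) N - S (xs N) N - 1/2 * h N * ((xt N - xs N) \<bullet> (A *v (xt N - xs N))))
          \<in> O(\<lambda>N. h N * ?R N * (norm (xt N - xs N))\<^sup>2)"
    using eventually_second_order_remainder_le by (rule bigoI)
  also have "(\<lambda>N. h N * ?R N * (norm (xt N - xs N))\<^sup>2) \<in> O(q)"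
  proof -
    have "?R \<in> O(q)"
      using xs_bigo radius_bigo eps_bigo_q by (intro sum_in_bigo) simp_all
    then have "(\<lambda>N. h N * ?R N * (norm (xt N - xs N) * norm (xt N - xs N))) \<in> O(\<lambda>N. h N * q N * (q N * q N))"
      by (intro landau_o.big_mult landau_o.big.mult_left step_bigo)
    also have "O(\<lambda>N. h N * q N * (q N * q N)) = O(q)"
      using eventually_q_identities by (intro landau_o.big.cong) (auto elim: eventually_mono)
    finally show ?thesis by (simp add: power2_eq_square)
  qed
  finally show ?thesis .
qed

lemma eventually_value_decomposition:
  "eventually (\<lambda>N. tildeS S h xstar xi (xt N) N - (S (xs N) N - 1/2 * (xi \<bullet> w))
      = (S (xt N) N - S (xs N) N - 1/2 * h N * ((xt N - xs N) \<bullet> (A *v (xt N - xs N))))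
        + 1/2 * (sqrt (h N) * (w \<bullet> (A *v rho N) - rho N \<bullet> xi))
        + 1/2 * (h N * (rho N \<bullet> (A *v rho N)))
        - sqrt (h N) * ((xs N - xstar) \<bullet> xi)) sequentially"
  using eventually_h_pos
proof eventually_elim
  case (elim N)
  let ?d = "xt N - xs N"
  have "A *v w = xi" by (simp add: w_def matrix_inv_cancel(2)[OF A_invertible])
  moreover have "h N * (q N)\<^sup>2 = 1" using elim by (simp add: q_def power_divide)
  ultimately have "1/2 * h N * (?d \<bullet> (A *v ?d)) - h N * q N * (?d \<bullet> xi)
      = - 1/2 * (xi \<bullet> w) + 1/2 * h N * q N * (w \<bullet> (A *v rho N) - rho N \<bullet> xi) + 1/2 * h N * (rho N \<bullet> (A *v rho N))"
    using quadratic_expansion_identity[of A w xi "h N" "q N" "rho N"] by (simp add: rho_def)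
  moreover have "tildeS S h xstar xi (xt N) N
                   = S (xt N) N - sqrt (h N) * ((xs N - xstar) \<bullet> xi) - h N * q N * (?d \<bullet> xi)"
    using sqrt_eq_h_mult_q[OF elim] by (simp add: tildeS_def inner_diff_left algebra_simps)
  ultimately show ?case
    using sqrt_eq_h_mult_q[OF elim] by (simp add: algebra_simps)
qed

lemma rho_linear_term_bigo: "(\<lambda>N. sqrt (h N) * (w \<bullet> (A *v rho N) - rho N \<bullet> xi)) \<in> O(q)"
proof -
  have "(\<lambda>N. w \<bullet> (A *v rho N) - rho N \<bullet> xi) \<in> O(\<lambda>N. norm (rho N))"
  proof (intro bigoI always_eventually allI)
    fix N
    have "\<bar>w \<bullet> (A *v rho N)\<bar> \<le> norm w * (norm A * norm (rho N))"
      by (rule order_trans[OF Cauchy_Schwarz_ineq2]) (simp add: mult_left_mono norm_matrix_vector_mult_le)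
    moreover have "\<bar>rho N \<bullet> xi\<bar> \<le> norm xi * norm (rho N)"
      by (metis Cauchy_Schwarz_ineq2 mult.commute)
    ultimately show "norm (w \<bullet> (A *v rho N) - rho N \<bullet> xi) \<le> (norm w * norm A + norm xi) * norm (norm (rho N))"
      by (simp add: algebra_simps)
  qed
  also note rho_bigo
  finally have "(\<lambda>N. sqrt (h N) * (w \<bullet> (A *v rho N) - rho N \<bullet> xi)) \<in> O(\<lambda>N. sqrt (h N) * (q N * q N))"
    by (rule landau_o.big.mult_left)
  also have "O(\<lambda>N. sqrt (h N) * (q N * q N)) = O(q)"
    using eventually_q_identities by (intro landau_o.big.cong) (auto elim: eventually_mono)
  finally show ?thesis .
qed

lemma rho_quadratic_term_bigo: "(\<lambda>N. h N * (rho N \<bullet> (A *v rho N))) \<in> O(q)"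
proof -
  have "(\<lambda>N. rho N \<bullet> (A *v rho N)) \<in> O(\<lambda>N. norm (rho N) * norm (rho N))"
  proof (intro bigoI always_eventually allI)
    fix N
    have "\<bar>rho N \<bullet> (A *v rho N)\<bar> \<le> norm (rho N) * (norm A * norm (rho N))"
      by (rule order_trans[OF Cauchy_Schwarz_ineq2]) (simp add: mult_left_mono norm_matrix_vector_mult_le)
    then show "norm (rho N \<bullet> (A *v rho N)) \<le> norm A * norm (norm (rho N) * norm (rho N))"
      by (simp add: algebra_simps)
  qed
  also have "(\<lambda>N. norm (rho N) * norm (rho N)) \<in> O(\<lambda>N. (q N * q N) * (q N * q N))"
    using rho_bigo rho_bigo by (rule landau_o.big_mult)
  finally have "(\<lambda>N. h N * (rho N \<bullet> (A *v rho N))) \<in> O(\<lambda>N. h N * ((q N * q N) * (q N * q N)))"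
    by (rule landau_o.big.mult_left)
  also have "O(\<lambda>N. h N * ((q N * q N) * (q N * q N))) = O(\<lambda>N. q N * q N)"
    using eventually_q_identities by (intro landau_o.big.cong) (auto elim: eventually_mono)
  finally show ?thesis using q_square_bigo by (rule landau_o.big_trans)
qed

lemma shift_term_bigo: "(\<lambda>N. sqrt (h N) * ((xs N - xstar) \<bullet> xi)) \<in> O(\<lambda>N. sqrt (h N) * eps N)"
proof -
  have "(\<lambda>N. (xs N - xstar) \<bullet> xi) \<in> O(\<lambda>N. norm (xs N - xstar))"
  proof (intro bigoI[where c = "norm xi"] always_eventually allI)
    fix N
    show "norm ((xs N - xstar) \<bullet> xi) \<le> norm xi * norm (norm (xs N - xstar))"
      using Cauchy_Schwarz_ineq2[of "xs N - xstar" xi] by (simp add: mult.commute)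
  qed
  also note xs_bigo_eps
  finally show ?thesis by (rule landau_o.big.mult_left)
qed

lemma value_bigo:
  assumes "q \<in> O(g)" "(\<lambda>N. sqrt (h N) * eps N) \<in> O(g)"
  shows "(\<lambda>N. tildeS S h xstar xi (xt N) N - (S (xs N) N - 1/2 * (xi \<bullet> w))) \<in> O(g)"
proof -
  note in_g = landau_o.big_trans[OF _ assms(1)]
  have "(\<lambda>N. 1/2 * (sqrt (h N) * (w \<bullet> (A *v rho N) - rho N \<bullet> xi))) \<in> O(g)"
    and "(\<lambda>N. 1/2 * (h N * (rho N \<bullet> (A *v rho N)))) \<in> O(g)"
    using in_g[OF rho_linear_term_bigo] in_g[OF rho_quadratic_term_bigo] by simp_all
  from sum_in_bigo(1)[OF sum_in_bigo(1)[OF in_g[OF second_order_remainder_bigo] this(1)] this(2)]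
  have "(\<lambda>N. (S (xt N) N - S (xs N) N - 1/2 * h N * ((xt N - xs N) \<bullet> (A *v (xt N - xs N))))
          + 1/2 * (sqrt (h N) * (w \<bullet> (A *v rho N) - rho N \<bullet> xi))
          + 1/2 * (h N * (rho N \<bullet> (A *v rho N)))
          - sqrt (h N) * ((xs N - xstar) \<bullet> xi)) \<in> O(g)"
    by (rule sum_in_bigo(2)[OF _ landau_o.big_trans[OF shift_term_bigo assms(2)]])
  then show ?thesis
    using eventually_value_decomposition by (subst landau_o.big.in_cong) auto
qed

lemma value_bigo_if_eps_small:
  assumes "eps \<in> o(\<lambda>N. 1 / h N)"
  shows "(\<lambda>N. tildeS S h xstar xi (xt N) N - (S (xs N) N - 1/2 * (xi \<bullet> (matrix_inv (D2s xstar) *v xi))))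
           \<in> O(\<lambda>N. 1 / sqrt (h N))"
proof -
  have "(\<lambda>N. sqrt (h N) * eps N) \<in> O(\<lambda>N. sqrt (h N) * (1 / h N))"
    using landau_o.small_imp_big[OF assms] by (rule landau_o.big.mult_left)
  also have "O(\<lambda>N. sqrt (h N) * (1 / h N)) = O(q)"
    using eventually_h_pos by (intro landau_o.big.cong) (auto elim!: eventually_mono simp: q_def field_simps)
  finally show ?thesis
    using value_bigo[OF landau_o.big_refl] by (simp add: q_def w_def A_def)
qed

lemma value_bigo_if_eps_large:
  assumes "(\<lambda>N. 1 / h N) \<in> o(eps)"
  shows "(\<lambda>N. tildeS S h xstar xi (xt N) N - (S (xs N) N - 1/2 * (xi \<bullet> (matrix_inv (D2s xstar) *v xi))))
           \<in> O(\<lambda>N. sqrt (h N) * eps N)"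
proof -
  have "eventually (\<lambda>N. sqrt (h N) * (1 / h N) = q N) sequentially"
    using eventually_h_pos by eventually_elim (simp add: q_def field_simps)
  moreover have "(\<lambda>N. sqrt (h N) * (1 / h N)) \<in> O(\<lambda>N. sqrt (h N) * eps N)"
    using landau_o.small_imp_big[OF assms] by (rule landau_o.big.mult_left)
  ultimately have "q \<in> O(\<lambda>N. sqrt (h N) * eps N)"
    by (subst (asm) landau_o.big.in_cong)
  then show ?thesis
    using value_bigo[OF _ landau_o.big_refl] by (simp add: w_def A_def)
qed

lemma eventually_hessian:
  "eventually (\<lambda>N. \<forall>x\<in>ball (xs N) \<delta>. hessS x N = h N *\<^sub>R (D2s x + eps N *\<^sub>R Jsigma x)) sequentially"
  using S_derivs ball_in_Om
proof eventually_elim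
  case (elim N)
  show ?case
  proof
    fix x assume "x \<in> ball (xs N) \<delta>"
    then have "x \<in> Om" and x_int: "x \<in> interior Om"
      using elim(2) interior_maximal[OF elim(2) open_ball] by auto
    have "((\<lambda>y. h N *\<^sub>R (Ds y + eps N *\<^sub>R sigma y)) has_derivative
            (\<lambda>v. h N *\<^sub>R (D2s x *v v + eps N *\<^sub>R (Jsigma x *v v)))) (at x within Om)"
      by (intro derivative_intros Ds_deriv sigma_deriv \<open>x \<in> Om\<close>)
    then have "((\<lambda>y. gradS y N) has_derivative
                 (\<lambda>v. h N *\<^sub>R (D2s x *v v + eps N *\<^sub>R (Jsigma x *v v)))) (at x within Om)"
      by (rule has_derivative_transform_within[OF _ zero_less_one \<open>x \<in> Om\<close>]) (use elim(1) in auto)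
    moreover have "((\<lambda>y. gradS y N) has_derivative (\<lambda>v. hessS x N *v v)) (at x within Om)"
      using elim(1) \<open>x \<in> Om\<close> by blast
    ultimately have "(\<lambda>v. hessS x N *v v) = (\<lambda>v. h N *\<^sub>R (D2s x *v v + eps N *\<^sub>R (Jsigma x *v v)))"
      unfolding at_within_interior[OF x_int] by (rule has_derivative_unique[rotated])
    then show "hessS x N = h N *\<^sub>R (D2s x + eps N *\<^sub>R Jsigma x)"
      by (simp add: matrix_eq fun_eq_iff matrix_vector_mult_add_rdistrib flip: scaleR_matrix_vector_assoc)
  qed
qed

lemma hessian_det_ratio_bigo:
  "(\<lambda>N. sqrt (det (hessS (xs N) N)) / sqrt (det (hessS (xt N) N)) - 1) \<in> O(\<lambda>N. 1 / sqrt (h N))"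
proof -
  define M where "M N x = D2s x + eps N *\<^sub>R Jsigma x" for N x
  have det_close: "(\<lambda>N. det (M N (y N)) - det A) \<in> O(q)"
    if "(\<lambda>N. norm (y N - xstar)) \<in> O(q)" "eventually (\<lambda>N. y N \<in> Om) sequentially" for y
  proof -
    have "(\<lambda>N. norm (M N (y N) - A)) \<in> O(\<lambda>N. norm (y N - xstar) + \<bar>eps N\<bar>)"
      using that(2) by (intro bigoI[where c = B]) (auto elim!: eventually_mono simp: M_def jacobian_near_A)
    also have "(\<lambda>N. norm (y N - xstar) + \<bar>eps N\<bar>) \<in> O(q)"
      using that(1) eps_bigo_q by (intro sum_in_bigo) simp_all
    finally show ?thesis using q_tendsto by (rule det_bigo)
  qed
  have "det A \<noteq> 0" using A_invertible by (simp add: invertible_det_nz)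
  then have ratio_M: "(\<lambda>N. sqrt (det (M N (xs N))) / sqrt (det (M N (xt N))) - 1) \<in> O(q)"
    using det_close[OF xs_bigo eventually_xs_in_Om] det_close[OF xt_bigo eventually_xt_in_Om] q_tendsto
    by (rule sqrt_ratio_bigo)
  have "eventually (\<lambda>N. sqrt (det (M N (xs N))) / sqrt (det (M N (xt N))) - 1
                   = sqrt (det (hessS (xs N) N)) / sqrt (det (hessS (xt N) N)) - 1) sequentially"
    using eventually_hessian eventually_xt_characterization eventually_h_pos order_tendstoD(2)[OF radius_tendsto \<delta>_pos]
  proof eventually_elim
    case (elim N)
    then have "xs N \<in> ball (xs N) \<delta>" "xt N \<in> ball (xs N) \<delta>"
      using \<delta>_pos by auto
    then have "det (hessS x N) = h N ^ CARD('n) * det (M N x)" if "x \<in> {xs N, xt N}" for x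
      using elim(1) that by (auto simp: M_def det_scaleR)
    moreover have "0 < sqrt (h N ^ CARD('n))" using elim(3) by simp
    ultimately show ?case using elim(3) by (simp add: real_sqrt_mult)
  qed
  then have "(\<lambda>N. sqrt (det (hessS (xs N) N)) / sqrt (det (hessS (xt N) N)) - 1) \<in> O(q)"
    using ratio_M by (subst (asm) landau_o.big.in_cong)
  then show ?thesis by (simp add: q_def)
qed

end

theorem mainTheorem7:
  fixes Om :: "(real^'n) set"
    and S :: "real^'n \<Rightarrow> nat \<Rightarrow> real"
    and gradS :: "real^'n \<Rightarrow> nat \<Rightarrow> real^'n"
    and hessS :: "real^'n \<Rightarrow> nat \<Rightarrow> real^'n^'n"
    and s :: "real^'n \<Rightarrow> real"
    and Ds :: "real^'n \<Rightarrow> real^'n"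
    and D2s :: "real^'n \<Rightarrow> real^'n^'n"
    and D3s :: "real^'n \<Rightarrow> real^'n \<Rightarrow> real^'n^'n"
    and sigma :: "real^'n \<Rightarrow> real^'n"
    and Jsigma :: "real^'n \<Rightarrow> real^'n^'n"
    and D2sigma :: "real^'n \<Rightarrow> real^'n \<Rightarrow> real^'n^'n"
    and eps h :: "nat \<Rightarrow> real"
    and xs :: "nat \<Rightarrow> real^'n"
    and xstar xi :: "real^'n"
    and N0 :: nat
  assumes conv: "convex Om"
    and uniq: "\<forall>N>N0. unique_max_at Om (\<lambda>x. S x N) (xs N)"
    and xs_lim: "xs \<longlonglongrightarrow> xstar"
    and eps_lim: "eps \<longlonglongrightarrow> 0"
    and h_lim: "filterlim h at_top sequentially"
    and h_N: "(\<forall>N. h N = real N) \<or> ((\<lambda>N. h N / real N) \<longlonglongrightarrow> 0)"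
    and s_C2: "\<forall>x\<in>Om. (s has_derivative (\<lambda>v. Ds x \<bullet> v)) (at x within Om)
                   \<and> (Ds has_derivative (\<lambda>v. D2s x *v v)) (at x within Om)
                   \<and> (D2s has_derivative D3s x) (at x within Om)"
    and s_cont: "continuous_on Om D2s"
    and sigma_C2: "\<forall>x\<in>Om. (sigma has_derivative (\<lambda>v. Jsigma x *v v)) (at x within Om)
                   \<and> (Jsigma has_derivative D2sigma x) (at x within Om)
                   \<and> (\<forall>v. (\<lambda>y. D2sigma y v) differentiable (at x within Om))"
    and sigma_cont: "continuous_on Om Jsigma"
    and bdd: "\<exists>B. \<forall>x\<in>Om. norm (sigma x) \<le> B \<and> norm (Jsigma x) \<le> B \<and> onorm (D2sigma x) \<le> B
                        \<and> norm (D2s x) \<le> B \<and> onorm (D3s x) \<le> B"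
    and D2s_inv: "\<forall>x\<in>Om. invertible (D2s x)"
    and S_deriv: "eventually (\<lambda>N. \<forall>x\<in>Om.
                     ((\<lambda>y. S y N) has_derivative (\<lambda>v. gradS x N \<bullet> v)) (at x within Om)
                   \<and> ((\<lambda>y. gradS y N) has_derivative (\<lambda>v. hessS x N *v v)) (at x within Om)
                   \<and> gradS x N = h N *\<^sub>R (Ds x + eps N *\<^sub>R sigma x)
                   \<and> (\<forall>v. v \<noteq> 0 \<longrightarrow> v \<bullet> (hessS x N *v v) < 0)) sequentially"
    and typeA: "\<exists>\<delta>>0. eventually (\<lambda>N. ball (xs N) \<delta> \<subseteq> Om) sequentially"
    and eps_small: "eps \<in> o(\<lambda>N. 1 / sqrt (h N))"
  shows "\<exists>xt :: nat \<Rightarrow> real^'n.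
     eventually (\<lambda>N. unique_max_at Om (\<lambda>x. tildeS S h xstar xi x N) (xt N)) sequentially
   \<and> (\<lambda>N. norm (xt N - xs N - (1 / sqrt (h N)) *\<^sub>R (matrix_inv (D2s xstar) *v xi)))
        \<in> O(\<lambda>N. 1 / h N)
   \<and> (eps \<in> o(\<lambda>N. 1 / h N) \<longrightarrow>
        (\<lambda>N. tildeS S h xstar xi (xt N) N
              - (S (xs N) N - 1/2 * (xi \<bullet> (matrix_inv (D2s xstar) *v xi))))
        \<in> O(\<lambda>N. 1 / sqrt (h N)))
   \<and> ((\<lambda>N. 1 / h N) \<in> o(eps) \<longrightarrow>
        (\<lambda>N. tildeS S h xstar xi (xt N) N
              - (S (xs N) N - 1/2 * (xi \<bullet> (matrix_inv (D2s xstar) *v xi))))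
        \<in> O(\<lambda>N. sqrt (h N) * eps N))
   \<and> (\<lambda>N. sqrt (det (hessS (xs N) N)) / sqrt (det (hessS (xt N) N)) - 1)
        \<in> O(\<lambda>N. 1 / sqrt (h N))"
proof -
  obtain B where B: "\<forall>x\<in>Om. norm (sigma x) \<le> B \<and> norm (Jsigma x) \<le> B \<and> onorm (D2sigma x) \<le> B
                        \<and> norm (D2s x) \<le> B \<and> onorm (D3s x) \<le> B"
    using bdd by blast
  obtain \<delta> where "0 < \<delta>" "eventually (\<lambda>N. ball (xs N) \<delta> \<subseteq> Om) sequentially"
    using typeA by blast
  moreover have "eventually (\<lambda>N. unique_max_at Om (\<lambda>x. S x N) (xs N)) sequentially"
    using eventually_gt_at_top[of N0] by eventually_elim (use uniq in blast)
  ultimately interpret type_a_maximum Om S gradS hessS Ds D2s D3s sigma Jsigma eps h xs xstar xi B \<delta>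
    using conv xs_lim eps_lim h_lim s_C2 sigma_C2 B D2s_inv S_deriv eps_small
    by unfold_locales auto
  show ?thesis
    using eventually_xt_characterization xt_expansion value_bigo_if_eps_small value_bigo_if_eps_large
      hessian_det_ratio_bigo
    by (intro exI[of _ xt] conjI impI) (auto elim: eventually_mono)
qed

end
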